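(* Let $D$ be a simple drawing of $K_n$ with $n\ge 6$ whose rotation system is generalized twisted, and let $(C_1,C_2)$ be a pair of antipodal vi-cells of $D$. Then for every vertex $v$ that lies neither on the boundary of $C_1$ nor on the boundary of $C_2$, there is a pair $(\bar C_1,\bar C_2)$ of antipodal vi-cells of the subdrawing $D\setminus\{v\}$ with $C_1\subseteq \bar C_1$ and $C_2\subseteq \bar C_2$.
   Context: A simple drawing of a graph maps vertices to distinct points of the plane and edges to Jordan arcs joining their endpoints and not passing through other vertices, such that any two edges share at most one point, which is either a common endpoint or a proper crossing. $D\setminus\{v\}$ denotes $D$ with the vertex $v$ and all edges incident to $v$ removed. Cells are the connected components of the complement of the drawing; a vi-cell is a cell with a vertex on its boundary. A triangle is the closed curve formed by three vertices and the three edges between them, dividing the plane into two sides; two cells are antipodal if for every triangle they lie on different sides. The rotation system (clockwise cyclic orders at the vertices) is generalized twisted if it is the rotation system of a simple drawing strongly isomorphic (via a plane homeomorphism) to one with a point $O$ such that every ray from $O$ crosses every edge at most once and some ray from $O$ crosses all edges. *)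

theory Defs
  imports "HOL-Analysis.Analysis"
begin

text \<open>Drawings of the complete graph on a finite vertex set V (a set of naturals) in the
  plane, modelled as the complex plane.  p v is the position of vertex v; for i < j the
  edge ij is the curve g i j, a Jordan arc from p i to p j.\<close>

definition edge :: "(nat \<Rightarrow> nat \<Rightarrow> real \<Rightarrow> complex) \<Rightarrow> nat \<Rightarrow> nat \<Rightarrow> complex set" where
  "edge g i j = path_image (g (min i j) (max i j))"

definition ocurve :: "(nat \<Rightarrow> nat \<Rightarrow> real \<Rightarrow> complex) \<Rightarrow> nat \<Rightarrow> nat \<Rightarrow> real \<Rightarrow> complex" where
  "ocurve g i j = (if i < j then g i j else reversepath (g j i))"

definition proper_crossing :: "complex set \<Rightarrow> complex set \<Rightarrow> complex \<Rightarrow> bool" where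
  "proper_crossing A B q \<longleftrightarrow>
     (\<exists>U f f'. open U \<and> q \<in> U \<and> homeomorphism U (ball 0 1) f f' \<and> f q = 0 \<and>
        f ` (A \<inter> U) = ball 0 1 \<inter> \<real> \<and> f ` (B \<inter> U) = ball 0 1 \<inter> {z. Re z = 0})"

definition simple_drawing :: "nat set \<Rightarrow> (nat \<Rightarrow> complex) \<Rightarrow> (nat \<Rightarrow> nat \<Rightarrow> real \<Rightarrow> complex) \<Rightarrow> bool" where
  "simple_drawing V p g \<longleftrightarrow>
     inj_on p V \<and>
     (\<forall>i\<in>V. \<forall>j\<in>V. i < j \<longrightarrow> arc (g i j) \<and> pathstart (g i j) = p i \<and> pathfinish (g i j) = p j) \<and>
     (\<forall>i\<in>V. \<forall>j\<in>V. \<forall>k\<in>V. i \<noteq> j \<and> k \<noteq> i \<and> k \<noteq> j \<longrightarrow> p k \<notin> edge g i j) \<and>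
     (\<forall>i\<in>V. \<forall>j\<in>V. \<forall>k\<in>V. i \<noteq> j \<and> i \<noteq> k \<and> j \<noteq> k \<longrightarrow> edge g i j \<inter> edge g i k = {p i}) \<and>
     (\<forall>i\<in>V. \<forall>j\<in>V. \<forall>k\<in>V. \<forall>l\<in>V. i \<noteq> j \<and> k \<noteq> l \<and> i \<noteq> k \<and> i \<noteq> l \<and> j \<noteq> k \<and> j \<noteq> l \<longrightarrow>
        edge g i j \<inter> edge g k l = {} \<or>
        (\<exists>q. edge g i j \<inter> edge g k l = {q} \<and> proper_crossing (edge g i j) (edge g k l) q))"

definition drawing_set :: "nat set \<Rightarrow> (nat \<Rightarrow> complex) \<Rightarrow> (nat \<Rightarrow> nat \<Rightarrow> real \<Rightarrow> complex) \<Rightarrow> complex set" where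
  "drawing_set V p g = p ` V \<union> \<Union>{edge g i j | i j. i \<in> V \<and> j \<in> V \<and> i \<noteq> j}"

definition cells :: "nat set \<Rightarrow> (nat \<Rightarrow> complex) \<Rightarrow> (nat \<Rightarrow> nat \<Rightarrow> real \<Rightarrow> complex) \<Rightarrow> complex set set" where
  "cells V p g = components (- drawing_set V p g)"

definition vi_cell :: "nat set \<Rightarrow> (nat \<Rightarrow> complex) \<Rightarrow> (nat \<Rightarrow> nat \<Rightarrow> real \<Rightarrow> complex) \<Rightarrow> complex set \<Rightarrow> bool" where
  "vi_cell V p g C \<longleftrightarrow> C \<in> cells V p g \<and> (\<exists>v\<in>V. p v \<in> frontier C)"

definition triangle :: "(nat \<Rightarrow> nat \<Rightarrow> real \<Rightarrow> complex) \<Rightarrow> nat \<Rightarrow> nat \<Rightarrow> nat \<Rightarrow> complex set" where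
  "triangle g a b c = edge g a b \<union> edge g b c \<union> edge g a c"

definition antipodal :: "nat set \<Rightarrow> (nat \<Rightarrow> nat \<Rightarrow> real \<Rightarrow> complex) \<Rightarrow> complex set \<Rightarrow> complex set \<Rightarrow> bool" where
  "antipodal V g C1 C2 \<longleftrightarrow>
     (\<forall>a\<in>V. \<forall>b\<in>V. \<forall>c\<in>V. a \<noteq> b \<and> a \<noteq> c \<and> b \<noteq> c \<longrightarrow>
        (C1 \<subseteq> inside (triangle g a b c) \<and> C2 \<subseteq> outside (triangle g a b c)) \<or>
        (C1 \<subseteq> outside (triangle g a b c) \<and> C2 \<subseteq> inside (triangle g a b c)))"

text \<open>Rotation systems.  For a curve c starting at c 0, first_hit c r is the first point of c at
  distance r from c 0.  cw_dist a b is the clockwise angle from direction a to direction b.\<close>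
definition first_hit :: "(real \<Rightarrow> complex) \<Rightarrow> real \<Rightarrow> complex" where
  "first_hit c r = c (Inf {t \<in> {0..1}. cmod (c t - c 0) = r})"

definition cw_dist :: "complex \<Rightarrow> complex \<Rightarrow> real" where
  "cw_dist a b = 2 * pi * frac ((Arg a - Arg b) / (2 * pi))"

text \<open>sigma is the clockwise rotation at v: sigma w is the clockwise successor of neighbour w,
  read off from the points where the edges first leave all sufficiently small circles around v.\<close>
definition has_rotation :: "nat set \<Rightarrow> (nat \<Rightarrow> complex) \<Rightarrow> (nat \<Rightarrow> nat \<Rightarrow> real \<Rightarrow> complex) \<Rightarrow> nat \<Rightarrow> (nat \<Rightarrow> nat) \<Rightarrow> bool" where
  "has_rotation V p g v \<sigma> \<longleftrightarrow>
     (\<exists>r0>0. \<forall>r. 0 < r \<and> r < r0 \<longrightarrow>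
        (let q = (\<lambda>w. first_hit (ocurve g v w) r - p v) in
         \<forall>w\<in>V - {v}. \<sigma> w \<in> V - {v, w} \<and>
            (\<forall>x\<in>V - {v, w, \<sigma> w}. cw_dist (q w) (q (\<sigma> w)) < cw_dist (q w) (q x))))"

definition same_rotation_system :: "nat set \<Rightarrow> (nat \<Rightarrow> complex) \<Rightarrow> (nat \<Rightarrow> nat \<Rightarrow> real \<Rightarrow> complex) \<Rightarrow>
    (nat \<Rightarrow> complex) \<Rightarrow> (nat \<Rightarrow> nat \<Rightarrow> real \<Rightarrow> complex) \<Rightarrow> bool" where
  "same_rotation_system V p g p' g' \<longleftrightarrow>
     (\<exists>\<rho>. \<forall>v\<in>V. has_rotation V p g v (\<rho> v) \<and> has_rotation V p' g' v (\<rho> v))"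

definition ray :: "complex \<Rightarrow> complex \<Rightarrow> complex set" where
  "ray c0 d = {c0 + of_real t * d | t. t \<ge> 0}"

definition generalized_twisted_drawing :: "nat set \<Rightarrow> (nat \<Rightarrow> complex) \<Rightarrow> (nat \<Rightarrow> nat \<Rightarrow> real \<Rightarrow> complex) \<Rightarrow> bool" where
  "generalized_twisted_drawing V p g \<longleftrightarrow> simple_drawing V p g \<and>
     (\<exists>c0. (\<forall>d. d \<noteq> 0 \<longrightarrow> (\<forall>i\<in>V. \<forall>j\<in>V. i \<noteq> j \<longrightarrow>
              (\<forall>x y. x \<in> ray c0 d \<inter> edge g i j \<and> y \<in> ray c0 d \<inter> edge g i j \<longrightarrow> x = y))) \<and>
          (\<exists>d. d \<noteq> 0 \<and> (\<forall>i\<in>V. \<forall>j\<in>V. i \<noteq> j \<longrightarrow> ray c0 d \<inter> edge g i j \<noteq> {})))"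

definition generalized_twisted_rotation :: "nat set \<Rightarrow> (nat \<Rightarrow> complex) \<Rightarrow> (nat \<Rightarrow> nat \<Rightarrow> real \<Rightarrow> complex) \<Rightarrow> bool" where
  "generalized_twisted_rotation V p g \<longleftrightarrow>
     (\<exists>p'' g'' h h'. generalized_twisted_drawing V p'' g'' \<and> homeomorphism UNIV UNIV h h' \<and>
        same_rotation_system V p g (h \<circ> p'') (\<lambda>i j. h \<circ> g'' i j))"

end

theory Submission
  imports Defs
begin

text \<open>Deleting v only removes points from the drawing, so each cell C of D lies in a unique cell
  C' of the subdrawing.  C' is again a vi-cell, because the vertex on the boundary of C is not v
  and therefore survives on the boundary of C'.  A triangle avoiding v belongs to the subdrawing,
  so the connected set C' misses it and lies on the same side as C.\<close>

lemma connected_disjoint_inside: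
  assumes "connected K" "K \<inter> T = {}" "x \<in> K" "x \<in> inside T"
  shows "K \<subseteq> inside T"
proof
  fix y assume "y \<in> K"
  then have "connected_component (- T) x y"
    using assms unfolding connected_component_def by blast
  then show "y \<in> inside T" using assms(4) by (rule inside_same_component)
qed

lemma connected_disjoint_outside:
  assumes "connected K" "K \<inter> T = {}" "x \<in> K" "x \<in> outside T"
  shows "K \<subseteq> outside T"
proof
  fix y assume "y \<in> K"
  then have "connected_component (- T) x y"
    using assms unfolding connected_component_def by blast
  then show "y \<in> outside T" using assms(4) by (rule outside_same_component)
qed

lemma drawing_set_mono: "W \<subseteq> V \<Longrightarrow> drawing_set W p g \<subseteq> drawing_set V p g"
  unfolding drawing_set_def by blast

lemma triangle_subset_drawing_set:
  "\<lbrakk>a \<in> V; b \<in> V; c \<in> V; a \<noteq> b; a \<noteq> c; b \<noteq> c\<rbrakk> \<Longrightarrow> triangle g a b c \<subseteq> drawing_set V p g"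
  unfolding triangle_def drawing_set_def by blast

lemma cell_disjoint_drawing_set: "C \<in> cells V p g \<Longrightarrow> C \<inter> drawing_set V p g = {}"
  unfolding cells_def using in_components_subset by blast

lemma cell_subset_cell_of_subdrawing:
  assumes "C \<in> cells V p g" "W \<subseteq> V"
  obtains C' where "C' \<in> cells W p g" "C \<subseteq> C'"
proof -
  obtain x where x: "x \<in> - drawing_set V p g" and C: "C = connected_component_set (- drawing_set V p g) x"
    using assms(1) unfolding cells_def components_iff by blast
  have sub: "- drawing_set V p g \<subseteq> - drawing_set W p g"
    using drawing_set_mono[OF assms(2)] by blast
  show thesis
  proof
    show "connected_component_set (- drawing_set W p g) x \<in> cells W p g"
      unfolding cells_def using x sub by (intro componentsI) blast
    show "C \<subseteq> connected_component_set (- drawing_set W p g) x"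
      unfolding C using sub by (rule connected_component_mono)
  qed
qed

lemma vi_cell_subset_vi_cell_of_subdrawing:
  assumes "vi_cell V p g C" "W \<subseteq> V" "\<forall>u \<in> V - W. p u \<notin> frontier C"
  obtains C' where "vi_cell W p g C'" "C \<subseteq> C'"
proof -
  obtain u where u: "u \<in> V" "p u \<in> frontier C"
    using assms(1) unfolding vi_cell_def by blast
  with assms(3) have "u \<in> W" by blast
  obtain C' where C': "C' \<in> cells W p g" "C \<subseteq> C'"
    using assms(1,2) cell_subset_cell_of_subdrawing unfolding vi_cell_def by blast
  have "p u \<notin> C'"
    using cell_disjoint_drawing_set[OF C'(1)] \<open>u \<in> W\<close> unfolding drawing_set_def by blast
  moreover have "p u \<in> closure C'"
    using u(2) closure_mono[OF C'(2)] unfolding frontier_def by blast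
  ultimately have "p u \<in> frontier C'"
    unfolding frontier_def using interior_subset by blast
  with C' \<open>u \<in> W\<close> show thesis
    using that unfolding vi_cell_def by blast
qed

lemma antipodal_cells_of_subdrawing:
  assumes "antipodal V g C1 C2" "C1 \<in> cells V p g" "C2 \<in> cells V p g" "W \<subseteq> V"
    and "C1' \<in> cells W p g" "C2' \<in> cells W p g" "C1 \<subseteq> C1'" "C2 \<subseteq> C2'"
  shows "antipodal W g C1' C2'"
  unfolding antipodal_def
proof (intro ballI impI)
  fix a b c assume abc: "a \<in> W" "b \<in> W" "c \<in> W" "a \<noteq> b \<and> a \<noteq> c \<and> b \<noteq> c"
  let ?T = "triangle g a b c"
  have "?T \<subseteq> drawing_set W p g"
    using abc by (intro triangle_subset_drawing_set) auto
  then have disj: "C1' \<inter> ?T = {}" "C2' \<inter> ?T = {}"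
    using cell_disjoint_drawing_set assms(5,6) by blast+
  have conn: "connected C1'" "connected C2'"
    using assms(5,6) in_components_connected unfolding cells_def by blast+
  obtain x1 x2 where "x1 \<in> C1" "x2 \<in> C2"
    using assms(2,3) in_components_nonempty unfolding cells_def by blast
  then have x: "x1 \<in> C1'" "x2 \<in> C2'" using assms(7,8) by blast+
  have "(C1 \<subseteq> inside ?T \<and> C2 \<subseteq> outside ?T) \<or> (C1 \<subseteq> outside ?T \<and> C2 \<subseteq> inside ?T)"
    using assms(1,4) abc unfolding antipodal_def by blast
  then show "(C1' \<subseteq> inside ?T \<and> C2' \<subseteq> outside ?T) \<or> (C1' \<subseteq> outside ?T \<and> C2' \<subseteq> inside ?T)"
    using \<open>x1 \<in> C1\<close> \<open>x2 \<in> C2\<close>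
      connected_disjoint_inside[OF conn(1) disj(1) x(1)] connected_disjoint_outside[OF conn(1) disj(1) x(1)]
      connected_disjoint_inside[OF conn(2) disj(2) x(2)] connected_disjoint_outside[OF conn(2) disj(2) x(2)]
    by blast
qed

theorem lemma25:
  fixes n :: nat and p :: "nat \<Rightarrow> complex" and g :: "nat \<Rightarrow> nat \<Rightarrow> real \<Rightarrow> complex"
    and C1 C2 :: "complex set" and v :: nat
  assumes "n \<ge> 6"
    and "simple_drawing {..<n} p g"
    and "generalized_twisted_rotation {..<n} p g"
    and "vi_cell {..<n} p g C1" and "vi_cell {..<n} p g C2"
    and "antipodal {..<n} g C1 C2"
    and "v < n" and "p v \<notin> frontier C1" and "p v \<notin> frontier C2"
  shows "\<exists>C1' C2'. vi_cell ({..<n} - {v}) p g C1' \<and> vi_cell ({..<n} - {v}) p g C2' \<and>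
           antipodal ({..<n} - {v}) g C1' C2' \<and> C1 \<subseteq> C1' \<and> C2 \<subseteq> C2'"
proof -
  let ?W = "{..<n} - {v}"
  have W: "?W \<subseteq> {..<n}" by blast
  obtain C1' where C1': "vi_cell ?W p g C1'" "C1 \<subseteq> C1'"
    using vi_cell_subset_vi_cell_of_subdrawing[OF assms(4) W] assms(8) by blast
  obtain C2' where C2': "vi_cell ?W p g C2'" "C2 \<subseteq> C2'"
    using vi_cell_subset_vi_cell_of_subdrawing[OF assms(5) W] assms(9) by blast
  have "antipodal ?W g C1' C2'"
    using assms(4,5) C1' C2' unfolding vi_cell_def
    by (intro antipodal_cells_of_subdrawing[OF assms(6) _ _ W]) auto
  with C1' C2' show ?thesis by blast
qed

end
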